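(* Let $(X,Y,\phi)$ be an $L$-context and $X'\subseteq X$, $Y'\subseteq Y$. Then $(X',Y',\phi_{X',Y'})$ is a reduct of $(X,Y,\phi)$ in RST if and only if both $X\setminus X'$ and $Y\setminus Y'$ are $\phi$-reducible in RST.
   Context: $L=(L,* )$ is a complete residuated lattice: a complete lattice with bottom $0$ and top $1$, equipped with a commutative associative operation $*$ with unit $1$ satisfying $a*\bigvee_i b_i=\bigvee_i a*b_i$; $\to$ is its residuum ($a*b\le c\iff a\le b\to c$). An $L$-context is a triple $(X,Y,\phi)$ with $X,Y$ sets and $\phi\colon X\times Y\to L$. $L^X$ is the set of maps $X\to L$ with $L$-order $L^X(\mu,\mu')=\bigwedge_{x}(\mu(x)\to\mu'(x))$. $(\phi^\exists\mu)(y)=\bigvee_{x\in X}\mu(x)*\phi(x,y)$, $(\phi^\forall\lambda)(x)=\bigwedge_{y\in Y}(\phi(x,y)\to\lambda(y))$. $\mathcal{K}\phi=\{\mu\in L^X\mid\phi^\forall\phi^\exists\mu=\mu\}$ with the inherited $L$-order. $\phi_{X',Y'}$ is the restriction of $\phi$ to $X'\times Y'$; $\mu_{X'}$ the restriction of $\mu$ to $X'$; $\underline{\mu'}\in L^X$ the extension of $\mu'\in L^{X'}$ by $0$. An isomorphism of complete $L$-lattices is an $L$-isometric bijection. Reduct in RST: $(X',Y',\phi_{X',Y'})$ is a reduct of $(X,Y,\phi)$ in RST if the map $S_1\colon\mathcal{K}\phi\to\mathcal{K}\phi_{X',Y'}$, $S_1\mu=(\phi_{X',Y'})^\forall(\phi_{X',Y'})^\exists\mu_{X'}$,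 is an isomorphism of complete $L$-lattices; equivalently (by a theorem of the paper) any one of $S_2\mu=((\phi_{X,Y'})^\forall(\phi_{X,Y'})^\exists\mu)_{X'}$, $F_1\mu'=\phi^\forall\phi^\exists\underline{\mu'}$, $F_2\mu'=(\phi_{X,Y'})^\forall(\phi_{X,Y'})^\exists\underline{\mu'}$ (between $\mathcal{K}\phi$ and $\mathcal{K}\phi_{X',Y'}$) is an isomorphism. $\phi$-reducibility in RST: $X\setminus X'$ is $\phi$-reducible in RST if for every $\mu\in L^X$ there is $\mu'\in L^{X'}$ with $\phi^\exists\mu=(\phi_{X',Y})^\exists\mu'$; $Y\setminus Y'$ is $\phi$-reducible in RST if for every $\lambda\in L^Y$ there is $\lambda'\in L^{Y'}$ with $\phi^\forall\lambda=(\phi_{X,Y'})^\forall\lambda'$. *)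

theory Defs
  imports Main
begin

definition complete_residuated_lattice ::
  "('l::complete_lattice \<Rightarrow> 'l \<Rightarrow> 'l) \<Rightarrow> ('l \<Rightarrow> 'l \<Rightarrow> 'l) \<Rightarrow> bool" where
  "complete_residuated_lattice mult res \<longleftrightarrow>
     (\<forall>a b c. mult (mult a b) c = mult a (mult b c)) \<and>
     (\<forall>a b. mult a b = mult b a) \<and>
     (\<forall>a. mult a top = a) \<and>
     (\<forall>a B. mult a (Sup B) = Sup (mult a ` B)) \<and>
     (\<forall>a b c. mult a b \<le> c \<longleftrightarrow> a \<le> res b c)"

text \<open>L^X, represented extensionally: maps that are bot (=0) outside X.
  With this representation, restriction to X' is zero-extension outside X',
  and extension by 0 from X' to X is the identity on representatives.\<close>
definition Lfun :: "'x set \<Rightarrow> ('x \<Rightarrow> 'l::complete_lattice) set" where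
  "Lfun X = {\<mu>. \<forall>x. x \<notin> X \<longrightarrow> \<mu> x = bot}"

definition restr :: "'x set \<Rightarrow> ('x \<Rightarrow> 'l::complete_lattice) \<Rightarrow> 'x \<Rightarrow> 'l" where
  "restr X' \<mu> = (\<lambda>x. if x \<in> X' then \<mu> x else bot)"

definition Lord :: "('l \<Rightarrow> 'l \<Rightarrow> 'l) \<Rightarrow> 'x set \<Rightarrow> ('x \<Rightarrow> 'l::complete_lattice) \<Rightarrow> ('x \<Rightarrow> 'l) \<Rightarrow> 'l" where
  "Lord res X \<mu> \<mu>' = (INF x\<in>X. res (\<mu> x) (\<mu>' x))"

definition up :: "('l \<Rightarrow> 'l \<Rightarrow> 'l) \<Rightarrow> 'x set \<Rightarrow> 'y set \<Rightarrow> ('x \<Rightarrow> 'y \<Rightarrow> 'l::complete_lattice)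
    \<Rightarrow> ('x \<Rightarrow> 'l) \<Rightarrow> 'y \<Rightarrow> 'l" where
  "up mult X Y \<phi> \<mu> = (\<lambda>y. if y \<in> Y then (SUP x\<in>X. mult (\<mu> x) (\<phi> x y)) else bot)"

definition down :: "('l \<Rightarrow> 'l \<Rightarrow> 'l) \<Rightarrow> 'x set \<Rightarrow> 'y set \<Rightarrow> ('x \<Rightarrow> 'y \<Rightarrow> 'l::complete_lattice)
    \<Rightarrow> ('y \<Rightarrow> 'l) \<Rightarrow> 'x \<Rightarrow> 'l" where
  "down res X Y \<phi> \<kappa> = (\<lambda>x. if x \<in> X then (INF y\<in>Y. res (\<phi> x y) (\<kappa> y)) else bot)"

definition Kset :: "('l \<Rightarrow> 'l \<Rightarrow> 'l) \<Rightarrow> ('l \<Rightarrow> 'l \<Rightarrow> 'l) \<Rightarrow> 'x set \<Rightarrow> 'y set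
    \<Rightarrow> ('x \<Rightarrow> 'y \<Rightarrow> 'l::complete_lattice) \<Rightarrow> ('x \<Rightarrow> 'l) set" where
  "Kset mult res X Y \<phi> = {\<mu> \<in> Lfun X. down res X Y \<phi> (up mult X Y \<phi> \<mu>) = \<mu>}"

definition L_iso :: "('l \<Rightarrow> 'l \<Rightarrow> 'l) \<Rightarrow> 'x set \<Rightarrow> 'x set \<Rightarrow> ('x \<Rightarrow> 'l::complete_lattice) set
    \<Rightarrow> ('x \<Rightarrow> 'l) set \<Rightarrow> (('x \<Rightarrow> 'l) \<Rightarrow> ('x \<Rightarrow> 'l)) \<Rightarrow> bool" where
  "L_iso res X X' A B f \<longleftrightarrow> bij_betw f A B \<and>
     (\<forall>\<mu>\<in>A. \<forall>\<mu>'\<in>A. Lord res X' (f \<mu>) (f \<mu>') = Lord res X \<mu> \<mu>')"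

definition reduct_RST :: "('l \<Rightarrow> 'l \<Rightarrow> 'l) \<Rightarrow> ('l \<Rightarrow> 'l \<Rightarrow> 'l) \<Rightarrow> 'x set \<Rightarrow> 'y set
    \<Rightarrow> ('x \<Rightarrow> 'y \<Rightarrow> 'l::complete_lattice) \<Rightarrow> 'x set \<Rightarrow> 'y set \<Rightarrow> bool" where
  "reduct_RST mult res X Y \<phi> X' Y' \<longleftrightarrow>
     L_iso res X X' (Kset mult res X Y \<phi>) (Kset mult res X' Y' \<phi>)
       (\<lambda>\<mu>. down res X' Y' \<phi> (up mult X' Y' \<phi> (restr X' \<mu>)))"

definition X_reducible_RST :: "('l \<Rightarrow> 'l \<Rightarrow> 'l) \<Rightarrow> 'x set \<Rightarrow> 'y set
    \<Rightarrow> ('x \<Rightarrow> 'y \<Rightarrow> 'l::complete_lattice) \<Rightarrow> 'x set \<Rightarrow> bool" where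
  "X_reducible_RST mult X Y \<phi> X' \<longleftrightarrow>
     (\<forall>\<mu>\<in>Lfun X. \<exists>\<mu>'\<in>Lfun X'. up mult X Y \<phi> \<mu> = up mult X' Y \<phi> \<mu>')"

definition Y_reducible_RST :: "('l \<Rightarrow> 'l \<Rightarrow> 'l) \<Rightarrow> 'x set \<Rightarrow> 'y set
    \<Rightarrow> ('x \<Rightarrow> 'y \<Rightarrow> 'l::complete_lattice) \<Rightarrow> 'y set \<Rightarrow> bool" where
  "Y_reducible_RST res X Y \<phi> Y' \<longleftrightarrow>
     (\<forall>\<kappa>\<in>Lfun Y. \<exists>\<kappa>'\<in>Lfun Y'. down res X Y \<phi> \<kappa> = down res X Y' \<phi> \<kappa>')"

end

theory Submission
  imports Defs
begin

text \<open>
  The map S1 is always onto K': the map F2, which closes a fuzzy set of objects using only the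
  attributes in Y', is a right inverse of it. Hence being a reduct amounts to S1 being injective
  and isometric on K.

  Reducibility of Y - Y' says exactly that every closed set \<mu> \<in> K is of the form
  down X Y' \<kappa>, and for such \<mu> the map S1 is just restriction to X'. Reducibility of X - X'
  says exactly that up \<mu> is already generated by the objects in X'; then \<mu> is the closure of its
  restriction to X', which gives injectivity, and the fuzzy Galois identity
  L^X(\<mu>, down \<kappa>) = L^Y(up \<mu>, \<kappa>) transports the L-order from X to Y and back to X'.
  Conversely, injectivity of S1 forces \<mu> = F2 (S1 \<mu>) and identifies \<mu> with the closure of its
  restriction to X', which are the two reducibility conditions.
\<close>

locale complete_residuated =
  fixes mult res :: "'l::complete_lattice \<Rightarrow> 'l \<Rightarrow> 'l"
  assumes crl: "complete_residuated_lattice mult res"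
begin

lemma adjoint: "mult a b \<le> c \<longleftrightarrow> a \<le> res b c"
  using crl unfolding complete_residuated_lattice_def by blast

lemma mult_commute: "mult a b = mult b a"
  using crl unfolding complete_residuated_lattice_def by blast

lemma mult_assoc: "mult (mult a b) c = mult a (mult b c)"
  using crl unfolding complete_residuated_lattice_def by blast

lemma mult_SUP: "mult a (SUP i\<in>I. f i) = (SUP i\<in>I. mult a (f i))"
  using crl unfolding complete_residuated_lattice_def by (simp add: image_image)

lemma mult_bot_left: "mult bot a = bot"
  using mult_SUP[of a id "{}"] mult_commute[of bot a] by simp

lemma mult_mono_left: "a \<le> b \<Longrightarrow> mult a c \<le> mult b c"
  using mult_SUP[of c id "{a, b}"] by (simp add: mult_commute sup_absorb2 le_iff_sup)

lemma res_mono: "b \<le> c \<Longrightarrow> res a b \<le> res a c"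
  by (meson adjoint order.refl order.trans)

lemma res_top: "res a top = top"
  using adjoint[of top a top] by (simp add: top_unique)

lemma res_INF: "res a (INF i\<in>I. f i) = (INF i\<in>I. res a (f i))"
proof -
  have "z \<le> res a (INF i\<in>I. f i) \<longleftrightarrow> z \<le> (INF i\<in>I. res a (f i))" for z
    by (simp add: adjoint[symmetric] le_INF_iff)
  then show ?thesis by (metis order.antisym order.refl)
qed

lemma res_SUP: "res (SUP i\<in>I. f i) c = (INF i\<in>I. res (f i) c)"
proof -
  have "z \<le> res (SUP i\<in>I. f i) c \<longleftrightarrow> z \<le> (INF i\<in>I. res (f i) c)" for z
    by (simp add: adjoint[symmetric] mult_SUP SUP_le_iff le_INF_iff)
  then show ?thesis by (metis order.antisym order.refl)
qed

lemma res_res: "res a (res b c) = res (mult a b) c"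
proof -
  have "z \<le> res a (res b c) \<longleftrightarrow> z \<le> res (mult a b) c" for z
    by (simp add: adjoint[symmetric] mult_assoc)
  then show ?thesis by (metis order.antisym order.refl)
qed

lemma up_Lfun: "up mult X Y \<phi> \<mu> \<in> Lfun Y"
  by (simp add: Lfun_def up_def)

lemma down_Lfun: "down res X Y \<phi> \<kappa> \<in> Lfun X"
  by (simp add: Lfun_def down_def)

lemma restr_Lfun: "restr X \<mu> \<in> Lfun X"
  by (simp add: Lfun_def restr_def)

lemma up_restr:
  assumes "X' \<subseteq> X"
  shows "up mult X Y \<phi> (restr X' \<mu>) = up mult X' Y \<phi> \<mu>"
proof -
  have eq: "(SUP x\<in>X. mult (restr X' \<mu> x) (\<phi> x y)) = (SUP x\<in>X'. mult (\<mu> x) (\<phi> x y))" for y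
  proof -
    have "X = X' \<union> (X - X')" using assms by blast
    then have "(SUP x\<in>X. mult (restr X' \<mu> x) (\<phi> x y))
        = sup (SUP x\<in>X'. mult (restr X' \<mu> x) (\<phi> x y)) (SUP x\<in>X - X'. mult (restr X' \<mu> x) (\<phi> x y))"
      by (simp only: SUP_union[symmetric])
    moreover have "(SUP x\<in>X'. mult (restr X' \<mu> x) (\<phi> x y)) = (SUP x\<in>X'. mult (\<mu> x) (\<phi> x y))"
      by (rule SUP_cong) (simp_all add: restr_def)
    moreover have "(SUP x\<in>X - X'. mult (restr X' \<mu> x) (\<phi> x y)) = bot"
      by (simp add: restr_def mult_bot_left)
    ultimately show ?thesis by simp
  qed
  show ?thesis unfolding up_def eq ..
qed

lemma up_mono: "\<mu> \<le> \<nu> \<Longrightarrow> up mult X Y \<phi> \<mu> \<le> up mult X Y \<phi> \<nu>"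
  unfolding up_def le_fun_def by (auto intro!: SUP_mono mult_mono_left)

lemma down_mono: "\<kappa> \<le> \<kappa>' \<Longrightarrow> down res X Y \<phi> \<kappa> \<le> down res X Y \<phi> \<kappa>'"
  unfolding down_def le_fun_def by (auto intro!: INF_mono res_mono)

lemma le_down_iff_up_le:
  assumes "\<mu> \<in> Lfun X"
  shows "\<mu> \<le> down res X Y \<phi> \<kappa> \<longleftrightarrow> up mult X Y \<phi> \<mu> \<le> \<kappa>"
proof -
  have "\<mu> \<le> down res X Y \<phi> \<kappa> \<longleftrightarrow> (\<forall>x\<in>X. \<forall>y\<in>Y. mult (\<mu> x) (\<phi> x y) \<le> \<kappa> y)"
    using assms by (auto simp: le_fun_def down_def Lfun_def le_INF_iff adjoint)
  also have "\<dots> \<longleftrightarrow> up mult X Y \<phi> \<mu> \<le> \<kappa>"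
    by (auto simp: le_fun_def up_def SUP_le_iff)
  finally show ?thesis .
qed

lemma down_up_extensive: "\<mu> \<in> Lfun X \<Longrightarrow> \<mu> \<le> down res X Y \<phi> (up mult X Y \<phi> \<mu>)"
  by (simp add: le_down_iff_up_le)

lemma up_down_le: "up mult X Y \<phi> (down res X Y \<phi> \<kappa>) \<le> \<kappa>"
  by (simp add: le_down_iff_up_le[symmetric] down_Lfun)

lemma down_up_down: "down res X Y \<phi> (up mult X Y \<phi> (down res X Y \<phi> \<kappa>)) = down res X Y \<phi> \<kappa>"
  by (simp add: order.antisym down_mono up_down_le down_up_extensive down_Lfun)

lemma up_down_up: "up mult X Y \<phi> (down res X Y \<phi> (up mult X Y \<phi> \<mu>)) = up mult X Y \<phi> \<mu>"
proof (rule order.antisym)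
  show "up mult X Y \<phi> (down res X Y \<phi> (up mult X Y \<phi> \<mu>)) \<le> up mult X Y \<phi> \<mu>"
    by (rule up_down_le)
  have "restr X \<mu> \<le> down res X Y \<phi> (up mult X Y \<phi> (restr X \<mu>))"
    by (simp add: down_up_extensive restr_Lfun)
  moreover have "up mult X Y \<phi> (restr X \<mu>) = up mult X Y \<phi> \<mu>"
    by (simp add: up_restr)
  ultimately show "up mult X Y \<phi> \<mu> \<le> up mult X Y \<phi> (down res X Y \<phi> (up mult X Y \<phi> \<mu>))"
    by (metis up_mono)
qed

lemma down_in_Kset: "down res X Y \<phi> \<kappa> \<in> Kset mult res X Y \<phi>"
  by (simp add: Kset_def down_up_down down_Lfun)

lemma Lord_down: "Lord res X \<mu> (down res X Y \<phi> \<kappa>) = Lord res Y (up mult X Y \<phi> \<mu>) \<kappa>"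
proof -
  have "Lord res X \<mu> (down res X Y \<phi> \<kappa>) = (INF x\<in>X. INF y\<in>Y. res (mult (\<mu> x) (\<phi> x y)) (\<kappa> y))"
    by (simp add: Lord_def down_def res_INF res_res)
  also have "\<dots> = (INF y\<in>Y. INF x\<in>X. res (mult (\<mu> x) (\<phi> x y)) (\<kappa> y))"
    by (rule INF_commute)
  also have "\<dots> = Lord res Y (up mult X Y \<phi> \<mu>) \<kappa>"
    by (simp add: Lord_def up_def res_SUP)
  finally show ?thesis .
qed

lemma restr_le: "restr X \<mu> \<le> \<mu>"
  by (simp add: le_fun_def restr_def)

lemma restr_mono: "\<mu> \<le> \<nu> \<Longrightarrow> restr X \<mu> \<le> restr X \<nu>"
  by (simp add: le_fun_def restr_def)

lemma restr_Lfun_eq: "\<mu> \<in> Lfun X \<Longrightarrow> restr X \<mu> = \<mu>"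
  by (auto simp: Lfun_def restr_def)

lemma restr_down: "X' \<subseteq> X \<Longrightarrow> restr X' (down res X Y \<phi> \<kappa>) = down res X' Y \<phi> \<kappa>"
  unfolding restr_def down_def by (rule ext) auto

lemma up_Lfun_subset: "\<nu> \<in> Lfun X' \<Longrightarrow> X' \<subseteq> X \<Longrightarrow> up mult X Y \<phi> \<nu> = up mult X' Y \<phi> \<nu>"
  by (metis restr_Lfun_eq up_restr)

lemma Lord_restr: "Lord res X (restr X \<mu>) (restr X \<nu>) = Lord res X \<mu> \<nu>"
  unfolding Lord_def by (rule INF_cong) (simp_all add: restr_def)

lemma down_subset:
  assumes "Y' \<subseteq> Y"
  shows "down res X Y' \<phi> \<kappa> = down res X Y \<phi> (\<lambda>y. if y \<in> Y' then \<kappa> y else top)"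
proof -
  have eq: "(INF y\<in>Y. res (\<phi> x y) (if y \<in> Y' then \<kappa> y else top)) = (INF y\<in>Y'. res (\<phi> x y) (\<kappa> y))"
    for x
  proof -
    have "Y = Y' \<union> (Y - Y')" using assms by blast
    then have "(INF y\<in>Y. res (\<phi> x y) (if y \<in> Y' then \<kappa> y else top))
        = inf (INF y\<in>Y'. res (\<phi> x y) (if y \<in> Y' then \<kappa> y else top))
              (INF y\<in>Y - Y'. res (\<phi> x y) (if y \<in> Y' then \<kappa> y else top))"
      by (simp only: INF_union[symmetric])
    moreover have "(INF y\<in>Y'. res (\<phi> x y) (if y \<in> Y' then \<kappa> y else top)) = (INF y\<in>Y'. res (\<phi> x y) (\<kappa> y))"
      by (rule INF_cong) simp_all
    moreover have "(INF y\<in>Y - Y'. res (\<phi> x y) (if y \<in> Y' then \<kappa> y else top)) = top"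
      by (simp add: res_top)
    ultimately show ?thesis by simp
  qed
  show ?thesis unfolding down_def eq ..
qed

lemma down_subset_in_Kset: "Y' \<subseteq> Y \<Longrightarrow> down res X Y' \<phi> \<kappa> \<in> Kset mult res X Y \<phi>"
  by (simp add: down_subset down_in_Kset)

end

locale subcontext = complete_residuated mult res
  for mult res :: "'l::complete_lattice \<Rightarrow> 'l \<Rightarrow> 'l" +
  fixes X X' :: "'x set" and Y Y' :: "'y set" and \<phi> :: "'x \<Rightarrow> 'y \<Rightarrow> 'l"
  assumes X'_subset: "X' \<subseteq> X" and Y'_subset: "Y' \<subseteq> Y"
begin

abbreviation K :: "('x \<Rightarrow> 'l) set" where
  "K \<equiv> Kset mult res X Y \<phi>"

abbreviation K' :: "('x \<Rightarrow> 'l) set" where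
  "K' \<equiv> Kset mult res X' Y' \<phi>"

abbreviation S1 :: "('x \<Rightarrow> 'l) \<Rightarrow> 'x \<Rightarrow> 'l" where
  "S1 \<mu> \<equiv> down res X' Y' \<phi> (up mult X' Y' \<phi> (restr X' \<mu>))"

abbreviation F2 :: "('x \<Rightarrow> 'l) \<Rightarrow> 'x \<Rightarrow> 'l" where
  "F2 \<nu> \<equiv> down res X Y' \<phi> (up mult X Y' \<phi> \<nu>)"

lemma S1_in_K': "S1 \<mu> \<in> K'"
  by (rule down_in_Kset)

lemma F2_in_K: "F2 \<nu> \<in> K"
  using Y'_subset by (rule down_subset_in_Kset)

lemma S1_down: "S1 (down res X Y' \<phi> \<kappa>) = restr X' (down res X Y' \<phi> \<kappa>)"
  by (simp add: restr_down X'_subset down_up_down)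

lemma S1_F2:
  assumes "\<nu> \<in> K'"
  shows "S1 (F2 \<nu>) = \<nu>"
proof -
  from assms have \<nu>: "\<nu> \<in> Lfun X'" and closed: "down res X' Y' \<phi> (up mult X' Y' \<phi> \<nu>) = \<nu>"
    by (simp_all add: Kset_def)
  have "S1 (F2 \<nu>) = restr X' (F2 \<nu>)"
    by (rule S1_down)
  also have "\<dots> = down res X' Y' \<phi> (up mult X Y' \<phi> \<nu>)"
    by (rule restr_down[OF X'_subset])
  also have "\<dots> = \<nu>"
    by (simp only: up_Lfun_subset[OF \<nu> X'_subset] closed)
  finally show ?thesis .
qed

lemma restr_closure_restr:
  assumes "\<mu> \<in> K"
  shows "restr X' (down res X Y \<phi> (up mult X Y \<phi> (restr X' \<mu>))) = restr X' \<mu>"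
proof (rule order.antisym)
  have "down res X Y \<phi> (up mult X Y \<phi> (restr X' \<mu>)) \<le> down res X Y \<phi> (up mult X Y \<phi> \<mu>)"
    by (intro down_mono up_mono restr_le)
  then show "restr X' (down res X Y \<phi> (up mult X Y \<phi> (restr X' \<mu>))) \<le> restr X' \<mu>"
    using assms by (auto simp: Kset_def le_fun_def restr_def)
  have "restr X' \<mu> \<in> Lfun X"
    using X'_subset by (auto simp: Lfun_def restr_def)
  then have "restr X' \<mu> \<le> down res X Y \<phi> (up mult X Y \<phi> (restr X' \<mu>))"
    by (rule down_up_extensive)
  then show "restr X' \<mu> \<le> restr X' (down res X Y \<phi> (up mult X Y \<phi> (restr X' \<mu>)))"
    by (metis restr_mono restr_Lfun restr_Lfun_eq)
qed

lemma Y_reducible_iff: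
  "Y_reducible_RST res X Y \<phi> Y' \<longleftrightarrow> (\<forall>\<mu>\<in>K. \<exists>\<kappa>\<in>Lfun Y'. \<mu> = down res X Y' \<phi> \<kappa>)"
proof
  assume "Y_reducible_RST res X Y \<phi> Y'"
  moreover have "\<mu> = down res X Y \<phi> (up mult X Y \<phi> \<mu>)" if "\<mu> \<in> K" for \<mu>
    using that by (simp add: Kset_def)
  ultimately show "\<forall>\<mu>\<in>K. \<exists>\<kappa>\<in>Lfun Y'. \<mu> = down res X Y' \<phi> \<kappa>"
    unfolding Y_reducible_RST_def using up_Lfun by metis
next
  assume "\<forall>\<mu>\<in>K. \<exists>\<kappa>\<in>Lfun Y'. \<mu> = down res X Y' \<phi> \<kappa>"
  then show "Y_reducible_RST res X Y \<phi> Y'"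
    unfolding Y_reducible_RST_def using down_in_Kset by blast
qed

lemma X_reducible_iff:
  "X_reducible_RST mult X Y \<phi> X' \<longleftrightarrow> (\<forall>\<mu>\<in>K. up mult X Y \<phi> \<mu> = up mult X' Y \<phi> \<mu>)"
proof
  assume X_red: "X_reducible_RST mult X Y \<phi> X'"
  show "\<forall>\<mu>\<in>K. up mult X Y \<phi> \<mu> = up mult X' Y \<phi> \<mu>"
  proof
    fix \<mu> assume \<mu>: "\<mu> \<in> K"
    then obtain \<nu> where \<nu>: "\<nu> \<in> Lfun X'" "up mult X Y \<phi> \<mu> = up mult X' Y \<phi> \<nu>"
      using X_red unfolding X_reducible_RST_def Kset_def by blast
    have up_\<nu>: "up mult X Y \<phi> \<nu> = up mult X Y \<phi> \<mu>"
      using up_Lfun_subset[OF \<nu>(1) X'_subset] \<nu>(2) by simp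
    have "\<nu> \<in> Lfun X" using \<nu>(1) X'_subset by (auto simp: Lfun_def)
    then have "\<nu> \<le> \<mu>"
      using down_up_extensive[of \<nu> X Y \<phi>] \<mu> by (simp add: up_\<nu> Kset_def)
    then have "\<nu> \<le> restr X' \<mu>"
      using \<nu>(1) by (auto simp: le_fun_def restr_def Lfun_def)
    then have "up mult X Y \<phi> \<mu> \<le> up mult X' Y \<phi> \<mu>"
      using X'_subset by (metis up_\<nu> up_mono up_restr)
    moreover have "up mult X' Y \<phi> \<mu> \<le> up mult X Y \<phi> \<mu>"
      using X'_subset by (metis up_mono up_restr restr_le)
    ultimately show "up mult X Y \<phi> \<mu> = up mult X' Y \<phi> \<mu>" by (rule order.antisym)
  qed
next
  assume gen: "\<forall>\<mu>\<in>K. up mult X Y \<phi> \<mu> = up mult X' Y \<phi> \<mu>"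
  show "X_reducible_RST mult X Y \<phi> X'"
    unfolding X_reducible_RST_def
  proof
    fix \<mu> :: "'x \<Rightarrow> 'l"
    let ?m = "down res X Y \<phi> (up mult X Y \<phi> \<mu>)"
    have "up mult X Y \<phi> \<mu> = up mult X Y \<phi> ?m"
      by (rule up_down_up[symmetric])
    also have "\<dots> = up mult X' Y \<phi> ?m"
      using gen down_in_Kset by blast
    also have "\<dots> = up mult X' Y \<phi> (restr X' ?m)"
      by (rule up_restr[symmetric]) simp
    finally have "up mult X Y \<phi> \<mu> = up mult X' Y \<phi> (restr X' ?m)" .
    then show "\<exists>\<mu>'\<in>Lfun X'. up mult X Y \<phi> \<mu> = up mult X' Y \<phi> \<mu>'"
      using restr_Lfun by blast
  qed
qed

lemma F2_S1_if_inj: "inj_on S1 K \<Longrightarrow> \<mu> \<in> K \<Longrightarrow> F2 (S1 \<mu>) = \<mu>"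
  by (erule inj_onD) (simp_all add: S1_F2 S1_in_K' F2_in_K)

lemma up_eq_if_inj:
  assumes inj: "inj_on S1 K" and \<mu>: "\<mu> \<in> K"
  shows "up mult X Y \<phi> \<mu> = up mult X' Y \<phi> \<mu>"
proof -
  let ?m = "down res X Y \<phi> (up mult X Y \<phi> (restr X' \<mu>))"
  have "S1 ?m = S1 \<mu>"
    by (simp only: restr_closure_restr[OF \<mu>])
  with inj have "?m = \<mu>"
    using down_in_Kset \<mu> by (rule inj_onD)
  then have "up mult X Y \<phi> \<mu> = up mult X Y \<phi> (restr X' \<mu>)"
    by (metis up_down_up)
  then show ?thesis
    by (simp add: up_restr X'_subset)
qed

lemma Lord_restr_eq:
  assumes X_gen: "\<forall>\<mu>\<in>K. up mult X Y \<phi> \<mu> = up mult X' Y \<phi> \<mu>"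
    and \<mu>1: "\<mu>1 \<in> K" and \<mu>2: "\<mu>2 \<in> K"
  shows "Lord res X' (restr X' \<mu>1) (restr X' \<mu>2) = Lord res X \<mu>1 \<mu>2"
proof -
  have "Lord res X \<mu>1 \<mu>2 = Lord res X \<mu>1 (down res X Y \<phi> (up mult X Y \<phi> \<mu>2))"
    using \<mu>2 by (simp add: Kset_def)
  also have "\<dots> = Lord res Y (up mult X Y \<phi> \<mu>1) (up mult X Y \<phi> \<mu>2)"
    by (rule Lord_down)
  also have "\<dots> = Lord res Y (up mult X' Y \<phi> \<mu>1) (up mult X' Y \<phi> \<mu>2)"
    using X_gen \<mu>1 \<mu>2 by simp
  also have "\<dots> = Lord res X' \<mu>1 (down res X' Y \<phi> (up mult X' Y \<phi> \<mu>2))"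
    by (rule Lord_down[symmetric])
  also have "down res X' Y \<phi> (up mult X' Y \<phi> \<mu>2) = restr X' (down res X Y \<phi> (up mult X Y \<phi> \<mu>2))"
    using X_gen \<mu>2 by (simp add: restr_down X'_subset)
  also have "\<dots> = restr X' \<mu>2"
    using \<mu>2 by (simp add: Kset_def)
  finally show ?thesis
    by (metis Lord_restr restr_Lfun restr_Lfun_eq)
qed

lemma L_iso_if_generated:
  assumes Y_gen: "\<forall>\<mu>\<in>K. \<exists>\<kappa>\<in>Lfun Y'. \<mu> = down res X Y' \<phi> \<kappa>"
    and X_gen: "\<forall>\<mu>\<in>K. up mult X Y \<phi> \<mu> = up mult X' Y \<phi> \<mu>"
  shows "L_iso res X X' K K' S1"
proof -
  have S1_restr: "S1 \<mu> = restr X' \<mu>" if \<mu>: "\<mu> \<in> K" for \<mu>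
  proof -
    obtain \<kappa> where "\<mu> = down res X Y' \<phi> \<kappa>"
      using Y_gen \<mu> by blast
    then show ?thesis by (simp only: S1_down)
  qed
  have closure_restr: "\<mu> = down res X Y \<phi> (up mult X' Y \<phi> (restr X' \<mu>))" if \<mu>: "\<mu> \<in> K" for \<mu>
  proof -
    have "\<mu> = down res X Y \<phi> (up mult X Y \<phi> \<mu>)"
      using \<mu> by (simp add: Kset_def)
    also have "up mult X Y \<phi> \<mu> = up mult X' Y \<phi> \<mu>"
      using X_gen \<mu> by blast
    also have "\<dots> = up mult X' Y \<phi> (restr X' \<mu>)"
      by (rule up_restr[symmetric]) simp
    finally show ?thesis .
  qed
  have "inj_on S1 K"
    by (rule inj_onI) (metis S1_restr closure_restr)
  moreover have "S1 ` K = K'"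
  proof
    show "S1 ` K \<subseteq> K'"
      using S1_in_K' by blast
    show "K' \<subseteq> S1 ` K"
    proof
      fix \<nu> assume "\<nu> \<in> K'"
      then have "\<nu> = S1 (F2 \<nu>)"
        by (rule S1_F2[symmetric])
      then show "\<nu> \<in> S1 ` K"
        using F2_in_K by (rule image_eqI)
    qed
  qed
  moreover have "Lord res X' (S1 \<mu>1) (S1 \<mu>2) = Lord res X \<mu>1 \<mu>2" if "\<mu>1 \<in> K" "\<mu>2 \<in> K" for \<mu>1 \<mu>2
    using that S1_restr Lord_restr_eq[OF X_gen] by simp
  ultimately show ?thesis
    by (simp add: L_iso_def bij_betw_def)
qed

theorem L_iso_S1_iff:
  "L_iso res X X' K K' S1 \<longleftrightarrow>
     (\<forall>\<mu>\<in>K. \<exists>\<kappa>\<in>Lfun Y'. \<mu> = down res X Y' \<phi> \<kappa>) \<and> (\<forall>\<mu>\<in>K. up mult X Y \<phi> \<mu> = up mult X' Y \<phi> \<mu>)"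
proof
  assume "L_iso res X X' K K' S1"
  then have inj: "inj_on S1 K"
    by (simp add: L_iso_def bij_betw_def)
  show "(\<forall>\<mu>\<in>K. \<exists>\<kappa>\<in>Lfun Y'. \<mu> = down res X Y' \<phi> \<kappa>) \<and> (\<forall>\<mu>\<in>K. up mult X Y \<phi> \<mu> = up mult X' Y \<phi> \<mu>)"
    using F2_S1_if_inj[OF inj] up_eq_if_inj[OF inj] up_Lfun by metis
next
  assume "(\<forall>\<mu>\<in>K. \<exists>\<kappa>\<in>Lfun Y'. \<mu> = down res X Y' \<phi> \<kappa>) \<and> (\<forall>\<mu>\<in>K. up mult X Y \<phi> \<mu> = up mult X' Y \<phi> \<mu>)"
  then show "L_iso res X X' K K' S1"
    by (intro L_iso_if_generated) simp_all
qed

end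

theorem mainTheorem6:
  fixes mult res :: "'l::complete_lattice \<Rightarrow> 'l \<Rightarrow> 'l"
    and X X' :: "'x set" and Y Y' :: "'y set" and \<phi> :: "'x \<Rightarrow> 'y \<Rightarrow> 'l"
  assumes "complete_residuated_lattice mult res"
    and "X' \<subseteq> X" and "Y' \<subseteq> Y"
  shows "reduct_RST mult res X Y \<phi> X' Y' \<longleftrightarrow>
         X_reducible_RST mult X Y \<phi> X' \<and> Y_reducible_RST res X Y \<phi> Y'"
proof -
  interpret subcontext mult res X X' Y Y' \<phi>
    using assms by unfold_locales
  show ?thesis
    unfolding reduct_RST_def L_iso_S1_iff X_reducible_iff Y_reducible_iff by blast
qed

end
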